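(* Let $G$ be a Tutte-Berge graph such that the induced subgraph of $G$ on $D(G)$ has no isolated vertices. Then $D(G)=\emptyset$ and $G$ has a perfect matching.
   Context: $\nu(G)$ is the matching number of $G$. For $U\subseteq V(G)$, $N_G(U)$ is the set of vertices adjacent to at least one vertex of $U$. $G$ is a Tutte-Berge graph if there exists an independent set $T$ of $G$ with $|T| = |N_G(T)| + |V(G)| - 2\nu(G)$. $D(G)$ is the set of vertices of $G$ left uncovered by at least one maximum matching of $G$. *)

theory Defs
  imports Main
begin

definition simple_graph :: "'a set \<Rightarrow> 'a set set \<Rightarrow> bool" where
  "simple_graph V E \<longleftrightarrow> finite V \<and>
     (\<forall>e\<in>E. \<exists>u v. e = {u, v} \<and> u \<noteq> v \<and> u \<in> V \<and> v \<in> V)"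

definition matching :: "'a set set \<Rightarrow> 'a set set \<Rightarrow> bool" where
  "matching E M \<longleftrightarrow> M \<subseteq> E \<and> (\<forall>e1\<in>M. \<forall>e2\<in>M. e1 \<noteq> e2 \<longrightarrow> e1 \<inter> e2 = {})"

definition matching_number :: "'a set set \<Rightarrow> nat" where
  "matching_number E = Max (card ` {M. matching E M})"

definition max_matching :: "'a set set \<Rightarrow> 'a set set \<Rightarrow> bool" where
  "max_matching E M \<longleftrightarrow> matching E M \<and> card M = matching_number E"

definition perfect_matching :: "'a set \<Rightarrow> 'a set set \<Rightarrow> 'a set set \<Rightarrow> bool" where
  "perfect_matching V E M \<longleftrightarrow> matching E M \<and> \<Union>M = V"

definition nbhd :: "'a set set \<Rightarrow> 'a set \<Rightarrow> 'a set" where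
  "nbhd E U = {v. \<exists>u\<in>U. {u, v} \<in> E}"

definition independent :: "'a set set \<Rightarrow> 'a set \<Rightarrow> bool" where
  "independent E T \<longleftrightarrow> (\<forall>u\<in>T. \<forall>v\<in>T. {u, v} \<notin> E)"

definition tutte_berge_graph :: "'a set \<Rightarrow> 'a set set \<Rightarrow> bool" where
  "tutte_berge_graph V E \<longleftrightarrow> (\<exists>T. T \<subseteq> V \<and> independent E T \<and>
     int (card T) = int (card (nbhd E T)) + int (card V) - 2 * int (matching_number E))"

definition D_set :: "'a set \<Rightarrow> 'a set set \<Rightarrow> 'a set" where
  "D_set V E = {v\<in>V. \<exists>M. max_matching E M \<and> v \<notin> \<Union>M}"

end

theory Submission
  imports Defs
begin

text \<open>Let \<open>T\<close> be an independent set witnessing the Tutte-Berge equality and \<open>M\<close> a maximum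
  matching. Matching partners map the covered vertices of \<open>T\<close> injectively into \<open>N(T)\<close>, so
  \<open>|T| \<le> |N(T)| + |T - \<Union>M|\<close>; the equality then forces \<open>|V - \<Union>M| \<le> |T - \<Union>M|\<close>, i.e. every
  vertex missed by a maximum matching lies in \<open>T\<close>. Hence \<open>D(G) \<subseteq> T\<close> is independent, and
  since \<open>D(G)\<close> has no isolated vertices it must be empty: every maximum matching is perfect.\<close>

lemma simple_graph_edgeE:
  assumes "simple_graph V E" "e \<in> E"
  obtains u v where "e = {u, v}" "u \<noteq> v" "u \<in> V" "v \<in> V"
  using assms unfolding simple_graph_def by blast

lemma simple_graph_edges_subset: "simple_graph V E \<Longrightarrow> E \<subseteq> Pow V"
  by (blast elim: simple_graph_edgeE)

lemma simple_graph_finite_edges: "simple_graph V E \<Longrightarrow> finite E"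
  by (metis finite_Pow_iff finite_subset simple_graph_def simple_graph_edges_subset)

lemma matching_Union_subset:
  assumes "simple_graph V E" "matching E M"
  shows "\<Union>M \<subseteq> V"
proof -
  have "M \<subseteq> Pow V"
    using assms simple_graph_edges_subset unfolding matching_def by (meson subset_trans)
  then show ?thesis
    by blast
qed

lemma card_Union_matching:
  assumes "simple_graph V E" "matching E M"
  shows "card (\<Union>M) = 2 * card M"
proof -
  have two: "card e = 2" if "e \<in> M" for e
    using that assms unfolding matching_def by (auto elim: simple_graph_edgeE)
  have "card (\<Union>M) = sum card M"
  proof (rule card_Union_disjoint)
    show "pairwise disjnt M"
      using assms(2) unfolding matching_def pairwise_def disjnt_def by blast
    show "finite e" if "e \<in> M" for e
      using two[OF that] by (simp add: card_ge_0_finite)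
  qed
  also have "\<dots> = 2 * card M"
    using two by simp
  finally show ?thesis .
qed

lemma max_matching_exists:
  assumes "simple_graph V E"
  shows "\<exists>M. max_matching E M"
proof -
  have "finite {M. matching E M}"
    using simple_graph_finite_edges[OF assms] unfolding matching_def by simp
  moreover have "matching E {}"
    unfolding matching_def by simp
  ultimately have "matching_number E \<in> card ` {M. matching E M}"
    unfolding matching_number_def by (intro Max_in) auto
  then show ?thesis
    unfolding max_matching_def by auto
qed

lemma matching_partner:
  assumes "simple_graph V E" "matching E M" "t \<in> \<Union>M"
  obtains w where "{t, w} \<in> M" "w \<noteq> t"
proof -
  obtain e where e: "e \<in> M" "t \<in> e"
    using assms(3) by blast
  then have "e \<in> E"
    using assms(2) unfolding matching_def by blast
  then obtain u v where "e = {u, v}" "u \<noteq> v"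
    by (rule simple_graph_edgeE[OF assms(1)])
  with e that show ?thesis
    by (auto simp: insert_commute)
qed

lemma card_matched_le_card_nbhd:
  assumes sg: "simple_graph V E" and m: "matching E M" and T: "T \<subseteq> V"
  shows "card (T \<inter> \<Union>M) \<le> card (nbhd E T)"
proof -
  define partner where "partner t = (SOME w. {t, w} \<in> M \<and> w \<noteq> t)" for t
  have partner: "{t, partner t} \<in> M \<and> partner t \<noteq> t" if covered: "t \<in> \<Union>M" for t
  proof -
    obtain w where "{t, w} \<in> M \<and> w \<noteq> t"
      using matching_partner[OF sg m covered] by blast
    then show ?thesis
      unfolding partner_def by (rule someI)
  qed
  have "inj_on partner (T \<inter> \<Union>M)"
  proof (rule inj_onI)
    fix t s assume t: "t \<in> T \<inter> \<Union>M" and s: "s \<in> T \<inter> \<Union>M" and eq: "partner t = partner s"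
    have "{t, partner t} \<in> M" "{s, partner s} \<in> M"
      using partner t s by blast+
    moreover have "{t, partner t} \<inter> {s, partner s} \<noteq> {}"
      using eq by blast
    ultimately have "{t, partner t} = {s, partner s}"
      using m unfolding matching_def by metis
    then show "t = s"
      using partner[of t] t eq by (auto simp: doubleton_eq_iff)
  qed
  moreover have "partner ` (T \<inter> \<Union>M) \<subseteq> nbhd E T"
  proof
    fix w assume "w \<in> partner ` (T \<inter> \<Union>M)"
    then obtain t where "t \<in> T" "t \<in> \<Union>M" "w = partner t"
      by blast
    moreover have "M \<subseteq> E"
      using m unfolding matching_def by blast
    ultimately show "w \<in> nbhd E T"
      using partner[of t] unfolding nbhd_def by blast
  qed
  moreover have "finite (nbhd E T)"
  proof (rule finite_subset)
    show "nbhd E T \<subseteq> V"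
      using simple_graph_edges_subset[OF sg] unfolding nbhd_def by blast
    show "finite V"
      using sg unfolding simple_graph_def by blast
  qed
  ultimately show ?thesis
    by (rule card_inj_on_le)
qed

lemma uncovered_subset_tutte_berge_set:
  assumes sg: "simple_graph V E" and T: "T \<subseteq> V"
    and eq: "int (card T) = int (card (nbhd E T)) + int (card V) - 2 * int (matching_number E)"
    and mm: "max_matching E M"
  shows "V - \<Union>M \<subseteq> T"
proof -
  have m: "matching E M" and cM: "card M = matching_number E"
    using mm unfolding max_matching_def by auto
  have fV: "finite V"
    using sg unfolding simple_graph_def by blast
  have UV: "\<Union>M \<subseteq> V"
    using matching_Union_subset[OF sg m] .
  have "card (V - \<Union>M) = card V - 2 * matching_number E"
    using card_Diff_subset[OF finite_subset[OF UV fV] UV] card_Union_matching[OF sg m] cM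
    by simp
  moreover have "card T = card (T \<inter> \<Union>M) + card (T - \<Union>M)"
    using finite_subset[OF T fV] by (rule card_Int_Diff)
  moreover note card_matched_le_card_nbhd[OF sg m T]
  moreover have "card (\<Union>M) \<le> card V"
    using card_mono[OF fV UV] .
  ultimately have "card (V - \<Union>M) \<le> card (T - \<Union>M)"
    using eq card_Union_matching[OF sg m] cM by linarith
  moreover have "T - \<Union>M \<subseteq> V - \<Union>M"
    using T by blast
  ultimately have "T - \<Union>M = V - \<Union>M"
    using fV by (intro card_seteq) auto
  then show ?thesis
    by blast
qed

lemma D_set_subset_tutte_berge_set:
  assumes "simple_graph V E" "T \<subseteq> V"
    and "int (card T) = int (card (nbhd E T)) + int (card V) - 2 * int (matching_number E)"
  shows "D_set V E \<subseteq> T"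
  using uncovered_subset_tutte_berge_set[OF assms] unfolding D_set_def by blast

lemma perfect_matching_if_D_set_empty:
  assumes "simple_graph V E" "D_set V E = {}"
  shows "\<exists>M. perfect_matching V E M"
proof -
  obtain M where M: "max_matching E M"
    using max_matching_exists[OF assms(1)] by blast
  then have "matching E M"
    unfolding max_matching_def by simp
  moreover have "V \<subseteq> \<Union>M"
    using M assms(2) unfolding D_set_def by blast
  ultimately show ?thesis
    using matching_Union_subset[OF assms(1)] unfolding perfect_matching_def by blast
qed

theorem lemma2p9:
  fixes V :: "'a set" and E :: "'a set set"
  assumes "simple_graph V E"
    and "tutte_berge_graph V E"
    and "\<forall>v\<in>D_set V E. \<exists>u\<in>D_set V E. {u, v} \<in> E"
  shows "D_set V E = {} \<and> (\<exists>M. perfect_matching V E M)"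
proof -
  obtain T where T: "T \<subseteq> V" "independent E T"
    "int (card T) = int (card (nbhd E T)) + int (card V) - 2 * int (matching_number E)"
    using assms(2) unfolding tutte_berge_graph_def by blast
  have "D_set V E \<subseteq> T"
    using D_set_subset_tutte_berge_set[OF assms(1) T(1,3)] .
  with T(2) assms(3) have "D_set V E = {}"
    unfolding independent_def by blast
  with perfect_matching_if_D_set_empty[OF assms(1)] show ?thesis
    by blast
qed

end
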